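(* Let $G$ be a connected graph. For any $i\in V(G)$, \[ r_i(G)\leq\frac{1}{\alpha_i(G)}. \]
   Context: $G$ is a finite simple graph with vertex set $[n]$ and Laplacian matrix $\mathcal{L}_G=D-A$. For a vertex $i$, $\alpha_i(G)=\min\{\mathbf{x}^\top\mathcal{L}_G\mathbf{x} : \mathbf{x}\in\mathbb{R}^n_+,\ \sum_j x_j^2=1,\ x_i=0\}$ (the inverse Perron value of $i$); for connected $G$ this equals the smallest eigenvalue of the principal submatrix $\mathcal{L}_G(i)$ obtained by deleting row and column $i$. The resistance distance $r_{ij}(G)$ is the effective resistance between $i$ and $j$ when every edge is a unit resistor, and the resistance eccentricity is $r_i(G)=\max_{j\in V(G)}r_{ij}(G)$. *)

theory Defs
  imports "HOL-Analysis.Analysis"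
begin

definition simple_graph :: "('n::finite \<Rightarrow> 'n \<Rightarrow> bool) \<Rightarrow> bool" where
  "simple_graph E \<longleftrightarrow> (\<forall>u v. E u v \<longrightarrow> E v u) \<and> (\<forall>u. \<not> E u u)"

definition graph_connected :: "('n::finite \<Rightarrow> 'n \<Rightarrow> bool) \<Rightarrow> bool" where
  "graph_connected E \<longleftrightarrow> (\<forall>u v. E\<^sup>*\<^sup>* u v)"

definition laplacian :: "('n::finite \<Rightarrow> 'n \<Rightarrow> bool) \<Rightarrow> real^'n^'n" where
  "laplacian E = (\<chi> u v. if u = v then real (card {w. E u w})
                         else if E u v then -1 else 0)"

definition inv_perron :: "('n::finite \<Rightarrow> 'n \<Rightarrow> bool) \<Rightarrow> 'n \<Rightarrow> real" where
  "inv_perron E i = Inf {x \<bullet> (laplacian E *v x) | x :: real^'n.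
       (\<forall>j. 0 \<le> x $ j) \<and> (\<Sum>j\<in>UNIV. (x $ j)\<^sup>2) = 1 \<and> x $ i = 0}"

text \<open>Effective resistance between i and j with unit resistors: inject unit
current at i, extract it at j; the potential v solves L v = e_i - e_j
(Kirchhoff + Ohm), and r_ij is the potential difference v_i - v_j.\<close>
definition resistance :: "('n::finite \<Rightarrow> 'n \<Rightarrow> bool) \<Rightarrow> 'n \<Rightarrow> 'n \<Rightarrow> real" where
  "resistance E i j = (THE r. \<exists>v :: real^'n.
       laplacian E *v v = axis i 1 - axis j 1 \<and> r = v $ i - v $ j)"

definition resistance_ecc :: "('n::finite \<Rightarrow> 'n \<Rightarrow> bool) \<Rightarrow> 'n \<Rightarrow> real" where
  "resistance_ecc E i = Max (range (resistance E i))"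

end

theory Submission
  imports Defs
begin

text \<open>Fix j and let w be the potential of a unit current from i to j, grounded at i, so that
  \<open>r\<^sub>i\<^sub>j = -w\<^sub>j\<close> and \<open>w\<^sup>T L w = r\<^sub>i\<^sub>j\<close>. Taking absolute values does not increase the Laplacian
  form, and \<open>|w|\<close> is a nonnegative vector vanishing at i, so the variational definition of
  \<open>\<alpha>\<^sub>i\<close> gives \<open>\<alpha>\<^sub>i \<parallel>w\<parallel>\<^sup>2 \<le> r\<^sub>i\<^sub>j\<close>. Since \<open>r\<^sub>i\<^sub>j\<^sup>2 = w\<^sub>j\<^sup>2 \<le> \<parallel>w\<parallel>\<^sup>2\<close>, this yields
  \<open>\<alpha>\<^sub>i r\<^sub>i\<^sub>j\<^sup>2 \<le> r\<^sub>i\<^sub>j\<close>, i.e. \<open>r\<^sub>i\<^sub>j \<le> 1/\<alpha>\<^sub>i\<close>.\<close>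

lemma laplacian_mult_nth:
  assumes "simple_graph E"
  shows "(laplacian E *v x) $ u = (\<Sum>w\<in>UNIV. if E u w then x$u - x$w else 0)"
proof -
  have no_loop: "\<not> E u u" using assms by (simp add: simple_graph_def)
  have "(laplacian E *v x) $ u
      = (\<Sum>w\<in>UNIV. (if w = u then real (card {w. E u w}) * x$u else 0) - (if E u w then x$w else 0))"
    unfolding matrix_vector_mult_def laplacian_def using no_loop by (auto intro!: sum.cong)
  also have "\<dots> = real (card {w. E u w}) * x$u - (\<Sum>w\<in>UNIV. if E u w then x$w else 0)"
    by (simp add: sum_subtractf)
  also have "\<dots> = (\<Sum>w\<in>UNIV. (if E u w then x$u else 0) - (if E u w then x$w else 0))"
    by (simp add: sum_subtractf sum.If_cases)
  also have "\<dots> = (\<Sum>w\<in>UNIV. if E u w then x$u - x$w else 0)"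
    by (auto intro!: sum.cong)
  finally show ?thesis .
qed

lemma laplacian_mult_const:
  assumes "simple_graph E"
  shows "laplacian E *v ((\<chi> u. c) :: real^'n::finite) = 0"
  by (simp add: vec_eq_iff laplacian_mult_nth[OF assms] cong: if_cong)

lemma laplacian_bilinear_form:
  assumes "simple_graph E"
  shows "x \<bullet> (laplacian E *v y) = (\<Sum>u\<in>UNIV. \<Sum>w\<in>UNIV. if E u w then x$u * (y$u - y$w) else 0)"
  unfolding inner_vec_def using laplacian_mult_nth[OF assms]
  by (auto simp add: sum_distrib_left if_distrib intro!: sum.cong)

lemma sum_edges_swap:
  assumes "simple_graph E"
  shows "(\<Sum>u\<in>UNIV. \<Sum>w\<in>UNIV. if E u w then f u w else 0)
       = (\<Sum>u\<in>UNIV. \<Sum>w\<in>UNIV. if E u w then (f w u :: real) else 0)"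
proof -
  have "\<And>u w. E u w = E w u" using assms unfolding simple_graph_def by blast
  then show ?thesis by (subst sum.swap) simp
qed

lemma sum_laplacian_mult:
  assumes "simple_graph E"
  shows "(\<Sum>u\<in>UNIV. (laplacian E *v x) $ u) = 0"
proof -
  have "(\<Sum>u\<in>UNIV. (laplacian E *v x) $ u)
      = (\<Sum>u\<in>UNIV. \<Sum>w\<in>UNIV. if E u w then x$u else 0) - (\<Sum>u\<in>UNIV. \<Sum>w\<in>UNIV. if E u w then x$w else 0)"
    unfolding laplacian_mult_nth[OF assms] sum_subtractf[symmetric]
    by (auto intro!: sum.cong)
  then show ?thesis using sum_edges_swap[OF assms, of "\<lambda>u w. x$w"] by simp
qed

lemma laplacian_quadratic_form:
  assumes "simple_graph E"
  shows "x \<bullet> (laplacian E *v x) = (1/2) * (\<Sum>u\<in>UNIV. \<Sum>w\<in>UNIV. if E u w then (x$u - x$w)\<^sup>2 else 0)"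
proof -
  have swapped: "x \<bullet> (laplacian E *v x) = (\<Sum>u\<in>UNIV. \<Sum>w\<in>UNIV. if E u w then x$w * (x$w - x$u) else 0)"
    unfolding laplacian_bilinear_form[OF assms] by (rule sum_edges_swap[OF assms])
  have "(\<Sum>u\<in>UNIV. \<Sum>w\<in>UNIV. if E u w then (x$u - x$w)\<^sup>2 else 0)
      = (\<Sum>u\<in>UNIV. \<Sum>w\<in>UNIV. (if E u w then x$u * (x$u - x$w) else 0) + (if E u w then x$w * (x$w - x$u) else 0))"
    by (auto intro!: sum.cong simp: power2_eq_square algebra_simps)
  also have "\<dots> = 2 * (x \<bullet> (laplacian E *v x))"
    using swapped laplacian_bilinear_form[OF assms, of x x] by (simp add: sum.distrib)
  finally show ?thesis by simp
qed

lemma laplacian_quadratic_form_nonneg: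
  "simple_graph E \<Longrightarrow> 0 \<le> x \<bullet> (laplacian E *v x)"
  by (simp add: laplacian_quadratic_form sum_nonneg)

lemma laplacian_quadratic_form_eq_0_imp_const:
  assumes "simple_graph E" "graph_connected E" "x \<bullet> (laplacian E *v x) = 0"
  shows "x $ u = x $ v"
proof -
  have "(\<Sum>u\<in>UNIV. \<Sum>w\<in>UNIV. if E u w then (x$u - x$w)\<^sup>2 else 0) = 0"
    using assms laplacian_quadratic_form[OF assms(1), of x] by simp
  then have "\<forall>u w. (if E u w then (x$u - x$w)\<^sup>2 else 0) = 0"
    by (simp add: sum_nonneg_eq_0_iff sum_nonneg)
  then have edge: "E u w \<Longrightarrow> x$u = x$w" for u w
    by (metis power_eq_0_iff right_minus_eq)
  have "E\<^sup>*\<^sup>* u v" using assms(2) by (simp add: graph_connected_def)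
  then show ?thesis by (induction rule: rtranclp_induct) (auto dest: edge)
qed

lemma laplacian_mult_eq_0_imp_const:
  assumes "simple_graph E" "graph_connected E" "laplacian E *v x = 0"
  shows "x $ u = x $ v"
  using assms laplacian_quadratic_form_eq_0_imp_const by fastforce

lemma laplacian_quadratic_form_abs_le:
  assumes "simple_graph E"
  shows "(\<chi> u. \<bar>x$u\<bar>) \<bullet> (laplacian E *v (\<chi> u. \<bar>x$u\<bar>)) \<le> x \<bullet> (laplacian E *v x)"
proof -
  have termwise: "(if E u w then \<bar>x$u\<bar> * (\<bar>x$u\<bar> - \<bar>x$w\<bar>) else 0)
      \<le> (if E u w then x$u * (x$u - x$w) else 0)" for u w
    by (simp add: right_diff_distrib abs_mult_self_eq abs_ge_self flip: abs_mult)
  show ?thesis unfolding laplacian_bilinear_form[OF assms] vec_lambda_beta by (intro sum_mono termwise)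
qed

text \<open>Adding to L the matrix whose i-th column is all ones gives M with \<open>\<Sum>\<^sub>u (M x)\<^sub>u = n x\<^sub>i\<close>.
  Since the kernel of L consists of the constants, M is injective, hence surjective, and
  \<open>M x = b\<close> with b of sum zero forces \<open>x\<^sub>i = 0\<close> and so \<open>L x = b\<close>.\<close>

lemma laplacian_surj_sum_zero:
  fixes E :: "'n::finite \<Rightarrow> 'n \<Rightarrow> bool"
  assumes sg: "simple_graph E" and conn: "graph_connected E" and b: "(\<Sum>u\<in>UNIV. b $ u) = 0"
  shows "\<exists>v. laplacian E *v v = b"
proof -
  fix i :: 'n
  define M where "M = laplacian E + ((\<chi> u w. if w = i then 1 else 0) :: real^'n^'n)"
  have M_mult: "(M *v x) $ u = (laplacian E *v x) $ u + x $ i" for x u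
  proof -
    have "(M *v x) $ u = (\<Sum>j\<in>UNIV. laplacian E $ u $ j * x $ j + (if j = i then x $ j else 0))"
      unfolding M_def by (auto simp: matrix_vector_mult_def algebra_simps intro!: sum.cong)
    then show ?thesis by (simp add: sum.distrib matrix_vector_mult_def)
  qed
  have M_mult_sum_zero: "x $ i = 0 \<and> laplacian E *v x = M *v x"
    if "(\<Sum>u\<in>UNIV. (M *v x) $ u) = 0" for x
  proof -
    have "(\<Sum>u\<in>UNIV. (M *v x) $ u) = real CARD('n) * x $ i"
      unfolding M_mult by (simp add: sum.distrib sum_laplacian_mult[OF sg])
    then have "x $ i = 0" using that by simp
    then show ?thesis by (simp add: vec_eq_iff M_mult)
  qed
  have "inj ((*v) M)"
  proof (rule injI)
    fix x y assume "M *v x = M *v y"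
    then have "M *v (x - y) = 0" by (simp add: matrix_vector_mult_diff_distrib)
    with M_mult_sum_zero[of "x - y"] have "(x - y) $ i = 0" "laplacian E *v (x - y) = 0" by auto
    then have "(x - y) $ u = 0" for u
      using laplacian_mult_eq_0_imp_const[OF sg conn, of "x - y" u i] by simp
    then show "x = y" by (simp add: vec_eq_iff)
  qed
  then have "surj ((*v) M)" by (intro linear_inj_imp_surj matrix_vector_mul_linear)
  then obtain v where "M *v v = b" by (metis surjD)
  then show ?thesis using M_mult_sum_zero[of v] b by metis
qed

lemma grounded_potential_exists:
  fixes E :: "'n::finite \<Rightarrow> 'n \<Rightarrow> bool"
  assumes sg: "simple_graph E" and conn: "graph_connected E"
  obtains w where "laplacian E *v w = axis i 1 - axis j 1" "w $ i = 0"
proof -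
  have "(\<Sum>u\<in>UNIV. (axis i 1 - axis j 1 :: real^'n) $ u) = 0"
    by (simp add: axis_def sum_subtractf)
  then obtain v where v: "laplacian E *v v = axis i 1 - axis j 1"
    using laplacian_surj_sum_zero[OF sg conn] by blast
  have "laplacian E *v (v - (\<chi> u. v $ i)) = axis i 1 - axis j 1"
    using v laplacian_mult_const[OF sg] by (simp add: matrix_vector_mult_diff_distrib)
  then show ?thesis by (rule that) simp
qed

lemma resistance_eq_potential_diff:
  assumes sg: "simple_graph E" and conn: "graph_connected E"
    and w: "laplacian E *v w = axis i 1 - axis j 1"
  shows "resistance E i j = w $ i - w $ j"
  unfolding resistance_def
proof (rule the_equality)
  show "\<exists>v. laplacian E *v v = axis i 1 - axis j 1 \<and> w $ i - w $ j = v $ i - v $ j"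
    using w by blast
next
  fix r assume "\<exists>v. laplacian E *v v = axis i 1 - axis j 1 \<and> r = v $ i - v $ j"
  then obtain v where v: "laplacian E *v v = axis i 1 - axis j 1" "r = v $ i - v $ j" by blast
  have "laplacian E *v (v - w) = 0" using v w by (simp add: matrix_vector_mult_diff_distrib)
  then have "(v - w) $ i = (v - w) $ j" using laplacian_mult_eq_0_imp_const[OF sg conn] by blast
  then show "r = w $ i - w $ j" using v by simp
qed

definition perron_feasible :: "'n::finite \<Rightarrow> (real^'n) set" where
  "perron_feasible i = {x. (\<forall>j. 0 \<le> x $ j) \<and> x \<bullet> x = 1 \<and> x $ i = 0}"

lemma inv_perron_eq_Inf:
  "inv_perron E i = Inf ((\<lambda>x. x \<bullet> (laplacian E *v x)) ` perron_feasible i)"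
  unfolding inv_perron_def perron_feasible_def
  by (rule arg_cong[where f=Inf]) (auto simp: inner_vec_def power2_eq_square)

lemma compact_perron_feasible: "compact (perron_feasible i)"
proof -
  have "closed (perron_feasible i)" unfolding perron_feasible_def
    by (intro closed_Collect_conj closed_Collect_all closed_Collect_le closed_Collect_eq
        continuous_intros)
  moreover have "bounded (perron_feasible i)"
    unfolding bounded_iff perron_feasible_def by (auto simp: norm_eq_sqrt_inner)
  ultimately show ?thesis by (simp add: compact_eq_bounded_closed)
qed

lemma perron_feasible_nonempty:
  assumes "CARD('n::finite) \<ge> 2"
  shows "perron_feasible (i :: 'n) \<noteq> {}"
proof -
  have "\<not> CARD('n) \<le> Suc 0" using assms by simp
  then obtain k :: 'n where "k \<noteq> i" by (metis (full_types) card_le_Suc0_iff_eq finite)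
  then have "axis k 1 \<in> perron_feasible i"
    unfolding perron_feasible_def by (auto simp: inner_axis_axis) (auto simp: axis_def)
  then show ?thesis by blast
qed

lemma inv_perron_le:
  assumes "simple_graph E" "x \<in> perron_feasible i"
  shows "inv_perron E i \<le> x \<bullet> (laplacian E *v x)"
  unfolding inv_perron_eq_Inf
proof (rule cInf_lower)
  show "bdd_below ((\<lambda>x. x \<bullet> (laplacian E *v x)) ` perron_feasible i)"
    by (rule bdd_belowI[of _ 0]) (auto simp: laplacian_quadratic_form_nonneg[OF assms(1)])
qed (use assms(2) in blast)

lemma inv_perron_pos:
  fixes E :: "'n::finite \<Rightarrow> 'n \<Rightarrow> bool"
  assumes sg: "simple_graph E" and conn: "graph_connected E" and card: "CARD('n) \<ge> 2"
  shows "0 < inv_perron E i"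
proof -
  let ?f = "\<lambda>x. x \<bullet> (laplacian E *v x)"
  have "compact (?f ` perron_feasible i)"
    by (intro compact_continuous_image compact_perron_feasible continuous_intros)
  moreover have "?f ` perron_feasible i \<noteq> {}" using perron_feasible_nonempty[OF card] by simp
  ultimately have "\<exists>y \<in> ?f ` perron_feasible i. \<forall>z \<in> ?f ` perron_feasible i. y \<le> z"
    by (rule compact_attains_inf)
  then obtain x where x: "x \<in> perron_feasible i" "\<forall>y\<in>perron_feasible i. ?f x \<le> ?f y"
    by auto
  have min: "inv_perron E i = ?f x"
    unfolding inv_perron_eq_Inf using x by (intro cInf_eq_minimum) auto
  have "?f x \<noteq> 0"
  proof
    assume "?f x = 0"
    then have "x $ u = x $ i" for u using laplacian_quadratic_form_eq_0_imp_const[OF sg conn] by blast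
    then have "x = 0" using x(1) by (simp add: perron_feasible_def vec_eq_iff)
    then show False using x(1) by (simp add: perron_feasible_def)
  qed
  then show ?thesis using min laplacian_quadratic_form_nonneg[OF sg, of x] by simp
qed

lemma inv_perron_mult_norm_le:
  assumes sg: "simple_graph E" and nonneg: "\<forall>j. 0 \<le> a $ j" and "a $ i = 0"
  shows "inv_perron E i * (a \<bullet> a) \<le> a \<bullet> (laplacian E *v a)"
proof (cases "a = 0")
  case False
  define s where "s = a \<bullet> a"
  have s_pos: "0 < s" using False by (simp add: s_def)
  define x where "x = (1 / sqrt s) *\<^sub>R a"
  have "x \<in> perron_feasible i"
    using nonneg \<open>a $ i = 0\<close> s_pos
    by (simp add: perron_feasible_def x_def s_def power2_eq_square[symmetric])
  then have "inv_perron E i \<le> x \<bullet> (laplacian E *v x)" by (rule inv_perron_le[OF sg])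
  also have "\<dots> = (a \<bullet> (laplacian E *v a)) / s"
    using s_pos by (simp add: x_def matrix_vector_mult_scaleR power2_eq_square[symmetric])
  finally show ?thesis using s_pos by (simp add: s_def le_divide_eq)
qed simp

lemma resistance_le_inv_perron:
  fixes E :: "'n::finite \<Rightarrow> 'n \<Rightarrow> bool"
  assumes sg: "simple_graph E" and conn: "graph_connected E" and "CARD('n) \<ge> 2"
  shows "resistance E i j \<le> 1 / inv_perron E i"
proof -
  define \<alpha> where "\<alpha> = inv_perron E i"
  have \<alpha>_pos: "0 < \<alpha>" using inv_perron_pos[OF assms] by (simp add: \<alpha>_def)
  obtain w where w: "laplacian E *v w = axis i 1 - axis j 1" "w $ i = 0"
    using grounded_potential_exists[OF sg conn] .
  define r where "r = - w $ j"
  have r: "resistance E i j = r"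
    using resistance_eq_potential_diff[OF sg conn w(1)] w(2) by (simp add: r_def)
  have energy: "w \<bullet> (laplacian E *v w) = r"
    using w by (simp add: r_def inner_diff_right inner_axis)
  define a :: "real^'n" where "a = (\<chi> u. \<bar>w $ u\<bar>)"
  have "\<alpha> * (w \<bullet> w) = \<alpha> * (a \<bullet> a)"
    by (simp add: a_def inner_vec_def abs_mult_self_eq)
  also have "\<dots> \<le> a \<bullet> (laplacian E *v a)"
    unfolding \<alpha>_def using inv_perron_mult_norm_le[OF sg] w(2) by (simp add: a_def)
  also have "\<dots> \<le> r"
    using laplacian_quadratic_form_abs_le[OF sg, of w] energy by (simp add: a_def)
  finally have "\<alpha> * (w \<bullet> w) \<le> r" .
  moreover have "r\<^sup>2 \<le> w \<bullet> w"
    using member_le_sum[of j UNIV "\<lambda>u. w $ u * w $ u"]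
    by (simp add: r_def inner_vec_def power2_eq_square)
  ultimately have "\<alpha> * r\<^sup>2 \<le> r"
    using \<alpha>_pos by (smt (verit) mult_left_mono)
  have "\<alpha> * r \<le> 1"
  proof (cases "0 < r")
    case True
    with \<open>\<alpha> * r\<^sup>2 \<le> r\<close> show ?thesis by (simp add: power2_eq_square)
  next
    case False
    with \<alpha>_pos show ?thesis by (smt (verit) mult_nonneg_nonpos)
  qed
  then have "r \<le> 1 / \<alpha>" using \<alpha>_pos by (simp add: le_divide_eq mult.commute)
  then show ?thesis by (simp add: r \<alpha>_def)
qed

theorem theorem4p1:
  fixes E :: "'n::finite \<Rightarrow> 'n \<Rightarrow> bool" and i :: 'n
  assumes "simple_graph E" and "graph_connected E" and "CARD('n) \<ge> 2"
  shows "resistance_ecc E i \<le> 1 / inv_perron E i"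
  unfolding resistance_ecc_def
  using resistance_le_inv_perron[OF assms] by (simp add: Max_le_iff)

end
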